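(* Let $n\ge2$, $p\in(1,2)\cup(2,\infty)$. Let $\Omega\subset\mathbb{R}^n$ be a domain, $T>0$, $u$ a viscosity solution of $u_t-\Delta u-(p-2)\frac{\langle D^2uDu,Du\rangle}{|Du|^2}=0$ in $\Omega\times(0,T)$, $U\Subset\Omega$ a smooth domain, $U_T=U\times(0,T)$, $\varepsilon\in(0,1]$, and let $u^\varepsilon\in C^0(\overline{U_T})\cap C^\infty(U_T)$ be the viscosity solution of $u^\varepsilon_t-\Delta u^\varepsilon-(p-2)\frac{\langle D^2u^\varepsilon Du^\varepsilon,Du^\varepsilon\rangle}{|Du^\varepsilon|^2+\varepsilon}=0$ in $U_T$ with $u^\varepsilon=u$ on the parabolic boundary of $U_T$. Let $Q_{2r}=(s-4r^2,s)\times B(z,2r)\Subset U_T$ and $\phi\in C_c^\infty(B(z,2r)\times(s-4r^2,s+4r^2))$. Then for any $\eta\in(0,1)$, $$\frac{\varepsilon}{2}\int_{Q_{2r}}\frac{(\Delta u^\varepsilon)^2-|D^2u^\varepsilon|^2}{|Du^\varepsilon|^2+\varepsilon}\phi^2\,dx\,dt\le\frac{1}{4(p-1)}\int_{Q_{2r}}(u^\varepsilon_t)^2\phi^2\,dx\,dt+\eta\int_{Q_{2r}}|D^2u^\varepsilon|^2\phi^2\,dx\,dt+C(\eta)\,\varepsilon\int_{Q_{2r}}|D\phi|^2\,dx\,dt,$$ where $C(\eta)$ depends only on $\eta$ (and $n$).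
   Context: $D$, $D^2$ denote spatial derivatives. *)

theory Defs
  imports "HOL-Analysis.Analysis"
begin

definition ddir :: "'a::real_normed_vector \<Rightarrow> ('a \<Rightarrow> real) \<Rightarrow> 'a \<Rightarrow> real" where
  "ddir v f y = deriv (\<lambda>h. f (y + h *\<^sub>R v)) 0"

fun iter_ddir :: "'a::real_normed_vector list \<Rightarrow> ('a \<Rightarrow> real) \<Rightarrow> 'a \<Rightarrow> real" where
  "iter_ddir [] f = f"
| "iter_ddir (v # vs) f = ddir v (iter_ddir vs f)"

definition Ck_on :: "nat \<Rightarrow> 'a::real_normed_vector set \<Rightarrow> ('a \<Rightarrow> real) \<Rightarrow> bool" where
  "Ck_on k S f \<longleftrightarrow>
     (\<forall>vs. length vs \<le> k \<longrightarrow>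
        continuous_on S (iter_ddir vs f) \<and>
        (length vs < k \<longrightarrow>
           (\<forall>y\<in>S. \<forall>v. (\<lambda>h. iter_ddir vs f (y + h *\<^sub>R v)) field_differentiable (at 0))))"

definition smooth_on :: "'a::real_normed_vector set \<Rightarrow> ('a \<Rightarrow> real) \<Rightarrow> bool" where
  "smooth_on S f \<longleftrightarrow> (\<forall>k. Ck_on k S f)"

definition Dx :: "'n::finite \<Rightarrow> ((real^'n) \<times> real \<Rightarrow> real) \<Rightarrow> (real^'n) \<times> real \<Rightarrow> real" where
  "Dx i f = ddir (axis i 1, 0) f"

definition Dt :: "((real^'n::finite) \<times> real \<Rightarrow> real) \<Rightarrow> (real^'n) \<times> real \<Rightarrow> real" where
  "Dt f = ddir (0, 1) f"

definition grad_x :: "((real^'n::finite) \<times> real \<Rightarrow> real) \<Rightarrow> (real^'n) \<times> real \<Rightarrow> real^'n" where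
  "grad_x f y = (\<chi> i. Dx i f y)"

definition hess_x :: "((real^'n::finite) \<times> real \<Rightarrow> real) \<Rightarrow> (real^'n) \<times> real \<Rightarrow> real^'n^'n" where
  "hess_x f y = (\<chi> i j. Dx i (Dx j f) y)"

definition lap_x :: "((real^'n::finite) \<times> real \<Rightarrow> real) \<Rightarrow> (real^'n) \<times> real \<Rightarrow> real" where
  "lap_x f y = trace (hess_x f y)"

definition mat_norm_sq :: "real^'n::finite^'n \<Rightarrow> real" where
  "mat_norm_sq X = (\<Sum>i\<in>UNIV. \<Sum>j\<in>UNIV. (X $ i $ j)^2)"

text \<open>Crandall-Ishii-Lions definition: subsolutions are tested with the lower
  semicontinuous envelope F_lo, supersolutions with the upper one F_hi, using C^2 test
  functions touching from above / below at a point of the open set D.\<close>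
definition visc_subsol ::
  "(real^'n::finite \<Rightarrow> real^'n^'n \<Rightarrow> real) \<Rightarrow> ((real^'n) \<times> real) set \<Rightarrow> ((real^'n) \<times> real \<Rightarrow> real) \<Rightarrow> bool" where
  "visc_subsol F D u \<longleftrightarrow>
     (\<forall>\<phi> y. Ck_on 2 D \<phi> \<and> y \<in> D \<and>
        (\<exists>\<delta>>0. \<forall>y'\<in>D \<inter> ball y \<delta>. u y' - \<phi> y' \<le> u y - \<phi> y)
        \<longrightarrow> Dt \<phi> y + F (grad_x \<phi> y) (hess_x \<phi> y) \<le> 0)"

definition visc_supersol ::
  "(real^'n::finite \<Rightarrow> real^'n^'n \<Rightarrow> real) \<Rightarrow> ((real^'n) \<times> real) set \<Rightarrow> ((real^'n) \<times> real \<Rightarrow> real) \<Rightarrow> bool" where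
  "visc_supersol F D u \<longleftrightarrow>
     (\<forall>\<phi> y. Ck_on 2 D \<phi> \<and> y \<in> D \<and>
        (\<exists>\<delta>>0. \<forall>y'\<in>D \<inter> ball y \<delta>. u y' - \<phi> y' \<ge> u y - \<phi> y)
        \<longrightarrow> Dt \<phi> y + F (grad_x \<phi> y) (hess_x \<phi> y) \<ge> 0)"

definition visc_sol ::
  "(real^'n::finite \<Rightarrow> real^'n^'n \<Rightarrow> real) \<Rightarrow> (real^'n \<Rightarrow> real^'n^'n \<Rightarrow> real)
     \<Rightarrow> ((real^'n) \<times> real) set \<Rightarrow> ((real^'n) \<times> real \<Rightarrow> real) \<Rightarrow> bool" where
  "visc_sol F_lo F_hi D u \<longleftrightarrow>
     continuous_on D u \<and> visc_subsol F_lo D u \<and> visc_supersol F_hi D u"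

text \<open>F(q,X) = -tr X - (p-2) <X q, q>/|q|^2 (q /= 0), with its semicontinuous envelopes at q = 0.\<close>
definition pF_lo :: "real \<Rightarrow> real^'n::finite \<Rightarrow> real^'n^'n \<Rightarrow> real" where
  "pF_lo p q X =
     (if q \<noteq> 0 then - trace X - (p - 2) * ((X *v q) \<bullet> q) / (norm q)^2
      else Inf ((\<lambda>e. - trace X - (p - 2) * ((X *v e) \<bullet> e)) ` sphere 0 1))"

definition pF_hi :: "real \<Rightarrow> real^'n::finite \<Rightarrow> real^'n^'n \<Rightarrow> real" where
  "pF_hi p q X =
     (if q \<noteq> 0 then - trace X - (p - 2) * ((X *v q) \<bullet> q) / (norm q)^2
      else Sup ((\<lambda>e. - trace X - (p - 2) * ((X *v e) \<bullet> e)) ` sphere 0 1))"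

definition pF_eps :: "real \<Rightarrow> real \<Rightarrow> real^'n::finite \<Rightarrow> real^'n^'n \<Rightarrow> real" where
  "pF_eps p \<epsilon> q X = - trace X - (p - 2) * ((X *v q) \<bullet> q) / ((norm q)^2 + \<epsilon>)"

definition smooth_domain :: "(real^'n::finite) set \<Rightarrow> bool" where
  "smooth_domain U \<longleftrightarrow> open U \<and> connected U \<and> U \<noteq> {} \<and> bounded U \<and>
     (\<exists>\<rho>. smooth_on UNIV \<rho> \<and> U = {x. \<rho> x < 0} \<and>
          (\<forall>x. \<rho> x = 0 \<longrightarrow> (\<chi> i. ddir (axis i 1) \<rho> x) \<noteq> 0))"

definition parabolic_boundary :: "(real^'n::finite) set \<Rightarrow> real \<Rightarrow> ((real^'n) \<times> real) set" where
  "parabolic_boundary U T = (closure U \<times> {0}) \<union> (frontier U \<times> {0..<T})"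

end

theory Submission
  imports Defs
begin

(*
  For smooth u, (Delta u)^2 - |D^2u|^2 is the spatial divergence of F = Delta u Du - D^2u Du.
  The divergence of phi^2 F / (|Du|^2 + eps) integrates to zero over the cylinder, since only
  spatial derivatives occur and phi vanishes near its lateral boundary. Expanding it, the
  left-hand side becomes
    - eps Int phi <D phi, F> / (|Du|^2 + eps)
    + eps Int phi^2 (Delta u <D^2u Du, Du> - |D^2u Du|^2) / (|Du|^2 + eps)^2.
  As |F|^2 <= 2 (n + 1) |D^2u|^2 |Du|^2, Young's inequality bounds the first integral by
  eta Int |D^2u|^2 phi^2 + C(eta) eps Int |D phi|^2 with C(eta) = (n + 1) / (2 eta).
  In the second, put c = <D^2u Du, Du> / (|Du|^2 + eps). Cauchy-Schwarz gives
  |D^2u Du|^2 >= c^2 (|Du|^2 + eps), and the equation reads u_t = Delta u + (p - 2) c, so the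
  integrand is at most phi^2 eps / (|Du|^2 + eps) c (u_t - (p - 1) c) <= phi^2 u_t^2 / (4 (p - 1)).
*)

lemma ddir_has_real_derivative:
  assumes "(\<lambda>h. f (y + h *\<^sub>R v)) field_differentiable (at 0)"
  shows "((\<lambda>h. f (y + h *\<^sub>R v)) has_real_derivative ddir v f y) (at 0)"
  unfolding ddir_def using assms DERIV_deriv_iff_field_differentiable by blast

lemma line_derivative_shift:
  fixes G :: "'a::real_normed_vector \<Rightarrow> real"
  assumes "((\<lambda>h. G ((y + s *\<^sub>R e) + h *\<^sub>R e)) has_real_derivative D) (at 0)"
  shows "((\<lambda>s. G (y + s *\<^sub>R e)) has_real_derivative D) (at s)"
proof -
  have "(\<lambda>h. G ((y + s *\<^sub>R e) + h *\<^sub>R e)) = (\<lambda>h. G (y + (h + s) *\<^sub>R e))"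
    by (auto simp: algebra_simps)
  then have "((\<lambda>h. G (y + (h + s) *\<^sub>R e)) has_real_derivative D) (at 0)"
    using assms by simp
  then show ?thesis using DERIV_shift[of "\<lambda>s. G (y + s *\<^sub>R e)" _ 0 s] by simp
qed

lemma Ck_on_continuous_on: "Ck_on k S f \<Longrightarrow> length vs \<le> k \<Longrightarrow> continuous_on S (iter_ddir vs f)"
  unfolding Ck_on_def by blast

lemma Ck_on_mono: "Ck_on k S f \<Longrightarrow> j \<le> k \<Longrightarrow> Ck_on j S f"
  unfolding Ck_on_def by auto

lemma iter_ddir_append: "iter_ddir vs (iter_ddir ws f) = iter_ddir (vs @ ws) f"
  by (induction vs) auto

lemma Ck_on_iter_ddir: "Ck_on (k + length ws) S f \<Longrightarrow> Ck_on k S (iter_ddir ws f)"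
  unfolding Ck_on_def iter_ddir_append by auto

lemma Ck_on_has_real_derivative_along_line:
  assumes "Ck_on k S f" "length vs < k" "x + s *\<^sub>R v \<in> S"
  shows "((\<lambda>s. iter_ddir vs f (x + s *\<^sub>R v)) has_real_derivative iter_ddir (v # vs) f (x + s *\<^sub>R v)) (at s)"
  unfolding iter_ddir.simps
  by (rule line_derivative_shift, rule ddir_has_real_derivative) (use assms in \<open>auto simp: Ck_on_def\<close>)

lemma norm_scaleR_add_scaleR_le:
  assumes "0 \<le> s" "s \<le> t" "0 \<le> r" "r \<le> t"
  shows "norm (s *\<^sub>R v + r *\<^sub>R w) \<le> t * (norm v + norm w)"
proof -
  have "norm (s *\<^sub>R v + r *\<^sub>R w) \<le> s * norm v + r * norm w"
    using norm_triangle_ineq[of "s *\<^sub>R v" "r *\<^sub>R w"] assms by simp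
  also have "\<dots> \<le> t * (norm v + norm w)"
    using assms by (simp add: distrib_left add_mono mult_right_mono)
  finally show ?thesis .
qed

lemma second_difference_mvt:
  assumes ck: "Ck_on 2 S f" and S: "ball y d \<subseteq> S" and t: "0 < t" "t * (norm v + norm w) < d"
  shows "\<exists>s r. 0 < s \<and> s < t \<and> 0 < r \<and> r < t \<and>
    f (y + t *\<^sub>R v + t *\<^sub>R w) - f (y + t *\<^sub>R v) - f (y + t *\<^sub>R w) + f y
      = t^2 * ddir w (ddir v f) (y + s *\<^sub>R v + r *\<^sub>R w)"
proof -
  have inS: "y + s *\<^sub>R v + r *\<^sub>R w \<in> S" if "0 \<le> s" "s \<le> t" "0 \<le> r" "r \<le> t" for s r
  proof -
    have "norm (s *\<^sub>R v + r *\<^sub>R w) < d"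
      using norm_scaleR_add_scaleR_le[OF that, of v w] t by linarith
    then have "y + (s *\<^sub>R v + r *\<^sub>R w) \<in> ball y d"
      by (metis add_diff_cancel_left' dist_commute dist_norm mem_ball)
    then show ?thesis using S by (auto simp: add.assoc)
  qed
  define \<phi> where "\<phi> s = f ((y + t *\<^sub>R w) + s *\<^sub>R v) - f (y + s *\<^sub>R v)" for s
  have "(\<phi> has_real_derivative (ddir v f ((y + t *\<^sub>R w) + s *\<^sub>R v) - ddir v f (y + s *\<^sub>R v))) (at s)"
    if "0 \<le> s" "s \<le> t" for s
    unfolding \<phi>_def
    using Ck_on_has_real_derivative_along_line[OF ck, of "[]" "y + t *\<^sub>R w" s v]
      Ck_on_has_real_derivative_along_line[OF ck, of "[]" y s v] inS[of s t] inS[of s 0] that t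
    by (intro DERIV_diff) (simp_all add: algebra_simps)
  then obtain s where s: "0 < s" "s < t"
    "\<phi> t - \<phi> 0 = t * (ddir v f ((y + t *\<^sub>R w) + s *\<^sub>R v) - ddir v f (y + s *\<^sub>R v))"
    using MVT2[OF t(1), of \<phi> "\<lambda>s. ddir v f ((y + t *\<^sub>R w) + s *\<^sub>R v) - ddir v f (y + s *\<^sub>R v)"]
    by auto
  define \<psi> where "\<psi> r = ddir v f ((y + s *\<^sub>R v) + r *\<^sub>R w)" for r
  have "(\<psi> has_real_derivative ddir w (ddir v f) ((y + s *\<^sub>R v) + r *\<^sub>R w)) (at r)"
    if "0 \<le> r" "r \<le> t" for r
    unfolding \<psi>_def
    using Ck_on_has_real_derivative_along_line[OF ck, of "[v]" "y + s *\<^sub>R v" r w] inS[of s r] that s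
    by simp
  then obtain r where r: "0 < r" "r < t" "\<psi> t - \<psi> 0 = t * ddir w (ddir v f) ((y + s *\<^sub>R v) + r *\<^sub>R w)"
    using MVT2[OF t(1), of \<psi> "\<lambda>r. ddir w (ddir v f) ((y + s *\<^sub>R v) + r *\<^sub>R w)"] by auto
  have "f (y + t *\<^sub>R v + t *\<^sub>R w) - f (y + t *\<^sub>R v) - f (y + t *\<^sub>R w) + f y = \<phi> t - \<phi> 0"
    unfolding \<phi>_def by (simp add: algebra_simps)
  also have "\<dots> = t * (\<psi> t - \<psi> 0)"
    using s(3) unfolding \<psi>_def by (simp add: algebra_simps)
  also have "\<dots> = t^2 * ddir w (ddir v f) (y + s *\<^sub>R v + r *\<^sub>R w)"
    using r(3) by (simp add: power2_eq_square)
  finally show ?thesis using s r by blast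
qed

lemma second_difference_quotient_tendsto:
  assumes ck: "Ck_on 2 S f" and S: "open S" "y \<in> S"
  shows "((\<lambda>t. (f (y + t *\<^sub>R v + t *\<^sub>R w) - f (y + t *\<^sub>R v) - f (y + t *\<^sub>R w) + f y) / t^2)
           \<longlongrightarrow> ddir w (ddir v f) y) (at_right 0)"
proof (rule tendstoI)
  fix e :: real assume "e > 0"
  let ?g = "ddir w (ddir v f)"
  have "continuous_on S ?g"
    using Ck_on_continuous_on[OF ck, of "[w, v]"] by simp
  then obtain d1 where d1: "d1 > 0" "\<And>x. dist x y < d1 \<Longrightarrow> dist (?g x) (?g y) < e"
    using S \<open>e > 0\<close> unfolding continuous_on_eq_continuous_at[OF S(1)] continuous_at_eps_delta by metis
  obtain d0 where d0: "d0 > 0" "ball y d0 \<subseteq> S" using S open_contains_ball by blast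
  define d where "d = min d0 d1"
  have d: "d > 0" "ball y d \<subseteq> S" using d0 d1 by (auto simp: d_def)
  have vw: "norm v + norm w + 1 > 0"
    using norm_ge_zero[of v] norm_ge_zero[of w] by linarith
  define t0 where "t0 = d / (norm v + norm w + 1)"
  have t0: "t0 > 0" using d vw by (simp add: t0_def)
  show "\<forall>\<^sub>F t in at_right 0. dist ((f (y + t *\<^sub>R v + t *\<^sub>R w) - f (y + t *\<^sub>R v) - f (y + t *\<^sub>R w) + f y) / t^2) (?g y) < e"
  proof (rule eventually_at_rightI[OF _ t0])
    fix t assume t: "t \<in> {0<..<t0}"
    have "t * (norm v + norm w) < d"
    proof -
      have "t * (norm v + norm w) \<le> t * (norm v + norm w + 1)" using t by simp
      also have "\<dots> < t0 * (norm v + norm w + 1)"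
        using t vw by (intro mult_strict_right_mono) auto
      also have "\<dots> = d" using vw by (simp add: t0_def)
      finally show ?thesis .
    qed
    then obtain s r where sr: "0 < s" "s < t" "0 < r" "r < t"
      "f (y + t *\<^sub>R v + t *\<^sub>R w) - f (y + t *\<^sub>R v) - f (y + t *\<^sub>R w) + f y
        = t^2 * ?g (y + s *\<^sub>R v + r *\<^sub>R w)"
      using second_difference_mvt[OF ck d(2), of t v w] t by auto
    have "dist (y + s *\<^sub>R v + r *\<^sub>R w) y < d1"
      using norm_scaleR_add_scaleR_le[of s t r v w] sr \<open>t * (norm v + norm w) < d\<close>
      by (simp add: dist_norm add.assoc d_def)
    then show "dist ((f (y + t *\<^sub>R v + t *\<^sub>R w) - f (y + t *\<^sub>R v) - f (y + t *\<^sub>R w) + f y) / t^2) (?g y) < e"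
      using d1(2) sr(5) t by simp
  qed
qed

lemma ddir_commute:
  assumes "Ck_on 2 S f" "open S" "y \<in> S"
  shows "ddir v (ddir w f) y = ddir w (ddir v f) y"
proof (rule tendsto_unique[OF trivial_limit_at_right_real])
  show "((\<lambda>t. (f (y + t *\<^sub>R v + t *\<^sub>R w) - f (y + t *\<^sub>R v) - f (y + t *\<^sub>R w) + f y) / t^2)
          \<longlongrightarrow> ddir w (ddir v f) y) (at_right 0)"
    using second_difference_quotient_tendsto[OF assms] .
  show "((\<lambda>t. (f (y + t *\<^sub>R v + t *\<^sub>R w) - f (y + t *\<^sub>R v) - f (y + t *\<^sub>R w) + f y) / t^2)
          \<longlongrightarrow> ddir v (ddir w f) y) (at_right 0)"
    using second_difference_quotient_tendsto[OF assms, of w v] by (simp add: algebra_simps)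
qed

lemma integrable_continuous_closure:
  fixes f :: "'a::euclidean_space \<Rightarrow> real"
  assumes Q: "open Q" "bounded Q" and f: "continuous_on (closure Q) f"
  shows "f integrable_on Q"
proof -
  have "compact (f ` closure Q)"
    using Q f by (simp add: compact_closure compact_continuous_image)
  then obtain M where M: "\<forall>x\<in>closure Q. norm (f x) \<le> M"
    using compact_imp_bounded[of "f ` closure Q"] unfolding bounded_iff by auto
  have L: "Q \<in> lmeasurable" using Q by (simp add: lmeasurable_open)
  show ?thesis
  proof (rule measurable_bounded_by_integrable_imp_integrable[where g="\<lambda>_. M"])
    show "f \<in> borel_measurable (lebesgue_on Q)"
      using continuous_imp_measurable_on_sets_lebesgue[of Q f] f L closure_subset
      by (meson continuous_on_subset fmeasurableD)
    show "(\<lambda>_. M) integrable_on Q" using L by (rule integrable_on_const)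
    show "norm (f x) \<le> M" if "x \<in> Q" for x using M that closure_subset by auto
    show "Q \<in> sets lebesgue" using L by auto
  qed
qed

lemma has_integral_shift_vanishing:
  fixes G :: "'a::euclidean_space \<Rightarrow> real"
  assumes "G integrable_on B" "\<And>y. y \<notin> B \<Longrightarrow> G y = 0" "B \<subseteq> cbox (a + c) (b + c)"
  shows "((\<lambda>y. G (y + c)) has_integral integral B G) (cbox a b)"
proof -
  have "(G has_integral integral B G) (cbox (a + c) (b + c))"
    using has_integral_on_superset[OF integrable_integral[OF assms(1)] assms(2,3)] .
  then show ?thesis
    using has_integral_shift_cbox_iff[of G c _ a b] by (simp add: o_def add.commute)
qed

lemma difference_quotient_bound:
  fixes G g :: "'a::real_normed_vector \<Rightarrow> real"
  assumes deriv: "\<And>y. ((\<lambda>h. G (y + h *\<^sub>R e)) has_real_derivative g y) (at 0)"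
    and bound: "\<And>y. \<bar>g y\<bar> \<le> M" and h: "h > 0"
  shows "\<bar>(G (y + h *\<^sub>R e) - G y) / h\<bar> \<le> M"
proof -
  obtain s where "G (y + h *\<^sub>R e) - G (y + 0 *\<^sub>R e) = (h - 0) * g (y + s *\<^sub>R e)"
    using MVT2[OF h, of "\<lambda>s. G (y + s *\<^sub>R e)" "\<lambda>s. g (y + s *\<^sub>R e)"]
      line_derivative_shift[OF deriv] by blast
  then have "(G (y + h *\<^sub>R e) - G y) / h = g (y + s *\<^sub>R e)"
    using h by (simp add: field_simps)
  then show ?thesis using bound by simp
qed

lemma bounded_subset_shifted_cbox:
  fixes B :: "'a::euclidean_space set"
  assumes "bounded B"
  obtains A where "\<And>c. norm c \<le> r \<Longrightarrow> B \<subseteq> cbox (-A + c) (A + c)"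
proof -
  obtain R where R: "\<forall>x\<in>B. norm x \<le> R" using assms unfolding bounded_iff by auto
  obtain A :: 'a where A: "cball 0 (R + r) \<subseteq> cbox (-A) A"
    using bounded_subset_cbox_symmetric[of "cball 0 (R + r)"] by auto
  have "B \<subseteq> cbox (-A + c) (A + c)" if "norm c \<le> r" for c
  proof
    fix y assume "y \<in> B"
    then have "norm (y - c) \<le> R + r" using R that norm_triangle_ineq4[of y c] by force
    then have "y - c \<in> cbox (-A) A" using A by auto
    then show "y \<in> cbox (-A + c) (A + c)"
      using cbox_translation[of c "-A" A] by (force simp: add.commute)
  qed
  then show ?thesis using that by blast
qed

lemma difference_quotient_has_integral_0:
  fixes G :: "'a::euclidean_space \<Rightarrow> real"
  assumes "G integrable_on B" "\<And>y. y \<notin> B \<Longrightarrow> G y = 0"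
    and "B \<subseteq> cbox (a + c) (b + c)" "B \<subseteq> cbox a b"
  shows "((\<lambda>y. (G (y + c) - G y) / h) has_integral 0) (cbox a b)"
proof -
  have "((\<lambda>y. G (y + c) - G (y + 0)) has_integral integral B G - integral B G) (cbox a b)"
    using assms by (intro has_integral_diff has_integral_shift_vanishing) auto
  then have "((\<lambda>y. (G (y + c) - G (y + 0)) / h) has_integral (integral B G - integral B G) / h) (cbox a b)"
    by (rule has_integral_divide)
  then show ?thesis by simp
qed

text \<open>The difference quotients of G in direction e integrate to 0 by translation invariance,
  are bounded by the mean value theorem and converge to g, so dominated convergence applies.\<close>
lemma line_derivative_has_integral_0:
  fixes G g :: "'a::euclidean_space \<Rightarrow> real"
  assumes deriv: "\<And>y. ((\<lambda>h. G (y + h *\<^sub>R e)) has_real_derivative g y) (at 0)"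
    and bound: "\<And>y. \<bar>g y\<bar> \<le> M"
    and int: "G integrable_on B" and "bounded B"
    and vanish: "\<And>y. y \<notin> B \<Longrightarrow> G y = 0 \<and> g y = 0"
  shows "(g has_integral 0) B"
proof -
  obtain A where A: "\<And>c. norm c \<le> norm e \<Longrightarrow> B \<subseteq> cbox (-A + c) (A + c)"
    using bounded_subset_shifted_cbox[OF \<open>bounded B\<close>] by blast
  define hn where "hn n = 1 / real (Suc n)" for n
  have hn: "0 < hn n" "hn n \<le> 1" for n by (auto simp: hn_def)
  have hn_e: "norm (hn n *\<^sub>R e) \<le> norm e" for n using hn[of n] by (simp add: mult_left_le_one_le)
  define Dn where "Dn n y = (G (y + hn n *\<^sub>R e) - G y) / hn n" for n y
  have "B \<subseteq> cbox (-A) A" using A[of 0] by simp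
  then have Dn_int: "(Dn n has_integral 0) (cbox (-A) A)" for n
    unfolding Dn_def using vanish
    by (intro difference_quotient_has_integral_0[OF int _ A] hn_e) auto
  have "hn \<longlonglongrightarrow> 0" unfolding hn_def using LIMSEQ_Suc[OF lim_1_over_n] by simp
  moreover have "\<forall>n. hn n \<noteq> 0" using hn(1) by (metis less_irrefl)
  ultimately have "filterlim hn (at 0) sequentially"
    by (auto simp: filterlim_at intro!: always_eventually)
  moreover have "((\<lambda>h. (G (y + h *\<^sub>R e) - G y) / h) \<longlongrightarrow> g y) (at 0)" for y
    using deriv[of y] unfolding DERIV_def by simp
  ultimately have conv: "(\<lambda>n. Dn n y) \<longlonglongrightarrow> g y" for y
    unfolding Dn_def by (rule filterlim_compose[rotated])
  have "norm (Dn n y) \<le> M" for n y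
    unfolding Dn_def using difference_quotient_bound[OF deriv bound hn(1)] by simp
  then have "g integrable_on cbox (-A) A" "(\<lambda>n. integral (cbox (-A) A) (Dn n)) \<longlonglongrightarrow> integral (cbox (-A) A) g"
    using dominated_convergence[of Dn "cbox (-A) A" "\<lambda>_. M" g] Dn_int conv
    by (blast intro: has_integral_integrable integrable_const)+
  moreover have "(\<lambda>n. integral (cbox (-A) A) (Dn n)) \<longlonglongrightarrow> 0"
    using integral_unique[OF Dn_int] by simp
  ultimately have "(g has_integral 0) (cbox (-A) A)"
    using LIMSEQ_unique has_integral_integral by metis
  then have "((\<lambda>y. if y \<in> B then g y else 0) has_integral 0) (cbox (-A) A)"
    by (rule has_integral_cong[THEN iffD1, rotated]) (use vanish in auto)
  then show ?thesis using A[of 0] by (simp add: has_integral_restrict_Int Int_absorb2)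
qed

lemma line_derivative_has_integral_0_open:
  fixes G g :: "'a::euclidean_space \<Rightarrow> real"
  assumes Q: "open Q" "bounded Q"
    and cont: "continuous_on (closure Q) G" "continuous_on (closure Q) g"
    and deriv: "\<And>y. y \<in> Q \<Longrightarrow> ((\<lambda>h. G (y + h *\<^sub>R e)) has_real_derivative g y) (at 0)"
    and exit: "\<And>y. y \<notin> Q \<Longrightarrow> \<exists>d>0. \<forall>h. \<bar>h\<bar> < d \<longrightarrow> y + h *\<^sub>R e \<in> Q \<longrightarrow> G (y + h *\<^sub>R e) = 0"
  shows "(g has_integral 0) Q"
proof -
  define G0 where "G0 y = (if y \<in> Q then G y else 0)" for y
  define g0 where "g0 y = (if y \<in> Q then g y else 0)" for y
  have deriv0: "((\<lambda>h. G0 (y + h *\<^sub>R e)) has_real_derivative g0 y) (at 0)" for y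
  proof (cases "y \<in> Q")
    case True
    have "open ((\<lambda>h::real. y + h *\<^sub>R e) -` Q)"
      by (intro continuous_open_vimage Q(1) continuous_intros)
    then have "\<forall>\<^sub>F h in nhds 0. y + h *\<^sub>R e \<in> Q"
      unfolding eventually_nhds using True by force
    then have "\<forall>\<^sub>F h in nhds 0. G0 (y + h *\<^sub>R e) = G (y + h *\<^sub>R e)"
      by eventually_elim (simp add: G0_def)
    then show ?thesis
      using DERIV_cong_ev[OF refl _ refl] deriv[OF True] True by (fastforce simp: g0_def)
  next
    case False
    obtain d where "d > 0" "\<forall>h. \<bar>h\<bar> < d \<longrightarrow> y + h *\<^sub>R e \<in> Q \<longrightarrow> G (y + h *\<^sub>R e) = 0"
      using exit[OF False] by blast
    then have "\<forall>\<^sub>F h in nhds 0. G0 (y + h *\<^sub>R e) = 0"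
      unfolding eventually_nhds_metric by (auto simp: G0_def dist_real_def)
    then show ?thesis
      using DERIV_cong_ev[OF refl _ refl, of _ "\<lambda>_. 0"] False by (fastforce simp: g0_def)
  qed
  have "compact (g ` closure Q)"
    using Q cont(2) by (simp add: compact_closure compact_continuous_image)
  then obtain M where M: "\<forall>x\<in>closure Q. norm (g x) \<le> M"
    using compact_imp_bounded[of "g ` closure Q"] unfolding bounded_iff by auto
  have bound0: "\<bar>g0 y\<bar> \<le> max M 0" for y
    using M closure_subset by (force simp: g0_def)
  have "G0 integrable_on Q"
    using integrable_continuous_closure[OF Q cont(1)]
    by (rule integrable_spike_finite[of "{}", rotated 2]) (auto simp: G0_def)
  then have "(g0 has_integral 0) Q"
    by (rule line_derivative_has_integral_0[OF deriv0 bound0 _ Q(2)]) (simp add: G0_def g0_def)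
  then show ?thesis by (rule has_integral_spike_finite[of "{}", rotated 2]) (auto simp: g0_def)
qed

lemma mult_le_weighted_squares:
  fixes x y k :: real
  assumes "k > 0"
  shows "x * y \<le> k / 2 * x^2 + y^2 / (2 * k)"
proof -
  have "0 \<le> (k * x - y)^2 / (2 * k)" using assms by simp
  also have "\<dots> = k / 2 * x^2 + y^2 / (2 * k) - x * y"
    using assms by (simp add: power2_eq_square field_simps)
  finally show ?thesis by simp
qed

lemma p_parabolic_drift_le:
  fixes \<epsilon> N p a b HH ut :: real
  assumes "\<epsilon> > 0" "N \<ge> 0" "p > 1" "HH \<ge> 0" "b^2 \<le> HH * N"
    and ut: "ut = a + (p - 2) * b / (N + \<epsilon>)"
  shows "\<epsilon> * (a * b - HH) / (N + \<epsilon>)^2 \<le> ut^2 / (4 * (p - 1))"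
proof -
  define D where "D = N + \<epsilon>"
  define c where "c = b / D"
  have D: "D > 0" "\<epsilon> \<le> D" using assms by (auto simp: D_def)
  have "HH * N \<le> HH * D" using assms by (intro mult_left_mono) (auto simp: D_def)
  then have "b^2 \<le> HH * D" using assms by linarith
  then have "b * c \<le> HH" using D by (simp add: c_def power2_eq_square pos_divide_le_eq)
  then have "(a * b - HH) / D^2 \<le> (a * b - b * c) / D^2"
    using D by (intro divide_right_mono) auto
  also have "\<dots> = c * (ut - (p - 1) * c) / D"
    using D by (simp add: ut c_def D_def[symmetric] power2_eq_square field_simps)
  also have "\<dots> \<le> ut^2 / (4 * (p - 1)) / D"
  proof -
    have "4 * (p - 1) * (c * (ut - (p - 1) * c)) \<le> ut^2"
      using zero_le_power2[of "ut - 2 * (p - 1) * c"] by (simp add: power2_eq_square algebra_simps)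
    then show ?thesis using D \<open>p > 1\<close> by (intro divide_right_mono) (simp_all add: field_simps)
  qed
  finally have "\<epsilon> * ((a * b - HH) / D^2) \<le> \<epsilon> * (ut^2 / (4 * (p - 1)) / D)"
    using \<open>\<epsilon> > 0\<close> by (intro mult_left_mono) auto
  also have "\<dots> = (\<epsilon> / D) * (ut^2 / (4 * (p - 1)))" by simp
  also have "\<dots> \<le> 1 * (ut^2 / (4 * (p - 1)))"
    using D \<open>p > 1\<close> by (intro mult_right_mono) auto
  finally show ?thesis by (simp add: D_def)
qed

lemma norm_power2_vec: "(norm (x :: real^'n))^2 = (\<Sum>i\<in>UNIV. (x $ i)^2)"
  unfolding power2_norm_eq_inner inner_vec_def by (simp add: power2_eq_square)

lemma trace_power2_le: "(trace (H :: real^'n^'n))^2 \<le> real CARD('n) * mat_norm_sq H"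
proof -
  have "(trace H)^2 \<le> (\<Sum>i\<in>UNIV. (H $ i $ i)^2) * real CARD('n)"
    unfolding trace_def by (rule sum_squared_le_sum_of_squares)
  also have "(\<Sum>i\<in>UNIV. (H $ i $ i)^2) \<le> mat_norm_sq H"
    unfolding mat_norm_sq_def by (intro sum_mono member_le_sum) auto
  finally show ?thesis by (simp add: mult.commute mult_left_mono)
qed

lemma norm_vector_matrix_mult_power2_le:
  "(norm ((x :: real^'n) v* H))^2 \<le> mat_norm_sq H * (norm x)^2"
proof -
  have "((x v* H) $ j)^2 \<le> (\<Sum>i\<in>UNIV. (H $ i $ j)^2) * (norm x)^2" for j
    using Cauchy_Schwarz_ineq_sum[of "\<lambda>i. H $ i $ j" "\<lambda>i. x $ i" UNIV]
    by (simp add: vector_matrix_mult_def norm_power2_vec mult.commute)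
  then have "(norm (x v* H))^2 \<le> (\<Sum>j\<in>UNIV. (\<Sum>i\<in>UNIV. (H $ i $ j)^2) * (norm x)^2)"
    unfolding norm_power2_vec[of "x v* H"] by (rule sum_mono)
  also have "\<dots> = mat_norm_sq H * (norm x)^2"
    unfolding mat_norm_sq_def sum_distrib_right[symmetric] by (subst sum.swap) simp
  finally show ?thesis .
qed

lemma norm_trace_flux_power2_le:
  fixes q :: "real^'n" and H :: "real^'n^'n"
  shows "(norm (trace H *\<^sub>R q - q v* H))^2 \<le> 2 * (real CARD('n) + 1) * mat_norm_sq H * (norm q)^2"
proof -
  have "(norm (trace H *\<^sub>R q - q v* H))^2 \<le> (\<bar>trace H\<bar> * norm q + norm (q v* H))^2"
    using norm_triangle_ineq4[of "trace H *\<^sub>R q" "q v* H"] by (simp add: power_mono)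
  also have "\<dots> \<le> 2 * ((trace H)^2 * (norm q)^2) + 2 * (norm (q v* H))^2"
    using zero_le_power2[of "\<bar>trace H\<bar> * norm q - norm (q v* H)"]
    by (simp add: power2_eq_square algebra_simps)
  also have "\<dots> \<le> 2 * (real CARD('n) * mat_norm_sq H * (norm q)^2) + 2 * (mat_norm_sq H * (norm q)^2)"
    using trace_power2_le[of H] norm_vector_matrix_mult_power2_le[of q H]
    by (intro add_mono mult_left_mono mult_right_mono) auto
  also have "\<dots> = 2 * (real CARD('n) + 1) * mat_norm_sq H * (norm q)^2"
    by (simp add: algebra_simps)
  finally show ?thesis .
qed

lemma mat_norm_sq_nonneg: "mat_norm_sq H \<ge> 0"
  unfolding mat_norm_sq_def by (intro sum_nonneg) auto

lemma neg_mult_inner_le: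
  fixes x y :: "'a::real_inner" and c :: real
  shows "- (c * (x \<bullet> y)) \<le> \<bar>c\<bar> * (norm x * norm y)"
proof -
  have "- (c * (x \<bullet> y)) \<le> \<bar>c\<bar> * \<bar>x \<bullet> y\<bar>" by (metis abs_ge_minus_self abs_mult)
  also have "\<dots> \<le> \<bar>c\<bar> * (norm x * norm y)"
    using Cauchy_Schwarz_ineq2[of x y] by (intro mult_left_mono) auto
  finally show ?thesis .
qed

lemma flux_young_bound:
  fixes q Pd :: "real^'n" and H :: "real^'n^'n" and \<epsilon> \<eta> P :: real
  assumes "\<epsilon> > 0" "\<eta> > 0"
  shows "- \<epsilon> / ((norm q)^2 + \<epsilon>) * P * (Pd \<bullet> (trace H *\<^sub>R q - q v* H))
    \<le> \<eta> * (mat_norm_sq H * P^2) + (real CARD('n) + 1) / (2 * \<eta>) * \<epsilon> * (norm Pd)^2"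
proof -
  define F where "F = trace H *\<^sub>R q - q v* H"
  define N where "N = (norm q)^2"
  define w where "w = 1 / (N + \<epsilon>)"
  define n where "n = real CARD('n) + 1"
  define k where "k = \<eta> / n"
  have "N \<ge> 0" by (simp add: N_def)
  then have N: "N \<ge> 0" "N + \<epsilon> > 0" using assms by auto
  have w: "w > 0" "\<epsilon> * w \<le> 1" "w * N \<le> 1" using N assms by (auto simp: w_def field_simps)
  have n: "n > 0" by (simp add: n_def)
  have k: "k > 0" using n assms by (simp add: k_def)
  have "- \<epsilon> * w * P * (Pd \<bullet> F) = (\<epsilon> * w) * (- (P * (Pd \<bullet> F)))" by simp
  also have "\<dots> \<le> (\<epsilon> * w) * (\<bar>P\<bar> * (norm Pd * norm F))"
    using neg_mult_inner_le assms w by (intro mult_left_mono) auto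
  also have "\<dots> = \<epsilon> * ((w * \<bar>P\<bar> * norm F) * norm Pd)" by (simp add: algebra_simps)
  also have "\<dots> \<le> \<epsilon> * (k / 2 * (w * \<bar>P\<bar> * norm F)^2 + (norm Pd)^2 / (2 * k))"
    using assms mult_le_weighted_squares[OF k] by (intro mult_left_mono) auto
  also have "\<dots> = k / 2 * \<epsilon> * w^2 * P^2 * (norm F)^2 + \<epsilon> * (norm Pd)^2 / (2 * k)"
    by (simp add: power_mult_distrib algebra_simps)
  also have "k / 2 * \<epsilon> * w^2 * P^2 * (norm F)^2 \<le> k / 2 * \<epsilon> * w^2 * P^2 * (2 * n * mat_norm_sq H * N)"
    using norm_trace_flux_power2_le[of H q] assms k unfolding F_def N_def n_def
    by (intro mult_left_mono) auto
  also have "\<dots> = (k * n) * ((\<epsilon> * w) * (w * N)) * (mat_norm_sq H * P^2)"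
    by (simp add: power2_eq_square algebra_simps)
  also have "\<dots> \<le> (k * n) * 1 * (mat_norm_sq H * P^2)"
  proof -
    have "(\<epsilon> * w) * (w * N) \<le> 1" by (rule mult_le_one) (use w N in auto)
    then show ?thesis using k n mat_norm_sq_nonneg[of H] by (intro mult_left_mono mult_right_mono) auto
  qed
  also have "\<epsilon> * (norm Pd)^2 / (2 * k) = n / (2 * \<eta>) * \<epsilon> * (norm Pd)^2"
    using n assms by (simp add: k_def field_simps)
  finally show ?thesis using n by (simp add: k_def F_def N_def w_def n_def)
qed

lemma smooth_on_imp_Ck_on: "smooth_on S f \<Longrightarrow> Ck_on k S f"
  by (simp add: smooth_on_def)

text \<open>A C^2 solution touches itself from above and below, so it is a classical solution.\<close>
lemma visc_sol_imp_equation: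
  assumes "visc_sol F F D u" "Ck_on 2 D u" "y \<in> D"
  shows "Dt u y + F (grad_x u y) (hess_x u y) = 0"
proof -
  have touch: "\<exists>\<delta>>0. \<forall>y'\<in>D \<inter> ball y \<delta>. u y' - u y' = u y - u y"
    by (intro exI[of _ 1]) auto
  have "Dt u y + F (grad_x u y) (hess_x u y) \<le> 0"
    using assms touch unfolding visc_sol_def visc_subsol_def by (metis order_refl)
  moreover have "Dt u y + F (grad_x u y) (hess_x u y) \<ge> 0"
    using assms touch unfolding visc_sol_def visc_supersol_def by (metis order_refl)
  ultimately show ?thesis by simp
qed

lemma lap_x_eq_sum: "lap_x u y = (\<Sum>j\<in>UNIV. Dx j (Dx j u) y)"
  by (simp add: lap_x_def trace_def hess_x_def)

lemma norm_grad_x_power2: "(norm (grad_x u y))^2 = (\<Sum>k\<in>UNIV. (Dx k u y)^2)"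
  by (simp add: norm_power2_vec grad_x_def)

lemma vanishes_near_fst_outside_support:
  fixes f :: "('a::heine_borel) \<times> ('b::topological_space) \<Rightarrow> 'c::zero"
  assumes supp: "compact (closure {x. f x \<noteq> 0})" "closure {x. f x \<noteq> 0} \<subseteq> A \<times> UNIV"
    and y: "fst y \<notin> A"
  shows "\<exists>d>0. \<forall>x. dist (fst x) (fst y) < d \<longrightarrow> f x = 0"
proof -
  define K where "K = fst ` closure {x. f x \<noteq> 0}"
  have K: "compact K"
    unfolding K_def by (rule compact_continuous_image[OF continuous_on_fst[OF continuous_on_id] supp(1)])
  have "K \<subseteq> A" using supp(2) by (auto simp: K_def)
  then have yK: "fst y \<notin> K" using y by auto
  obtain d where d: "d > 0" "\<forall>k\<in>K. d \<le> dist (fst y) k"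
    using separate_point_closed[OF compact_imp_closed[OF K] yK] by blast
  have "f x = 0" if "dist (fst x) (fst y) < d" for x
  proof (rule ccontr)
    assume "f x \<noteq> 0"
    then have "x \<in> closure {x. f x \<noteq> 0}" using closure_subset[of "{x. f x \<noteq> 0}"] by auto
    then have "d \<le> dist (fst y) (fst x)" using d(2) by (simp add: K_def)
    then show False using that by (simp add: dist_commute)
  qed
  then show ?thesis using d(1) by blast
qed

context
  fixes u \<phi> :: "(real^'n::finite) \<times> real \<Rightarrow> real" and \<epsilon> :: real and S :: "((real^'n) \<times> real) set"
  assumes open_S: "open S" and u_C3: "Ck_on 3 S u" and \<phi>_C1: "Ck_on 1 UNIV \<phi>" and \<epsilon>_pos: "\<epsilon> > 0"
begin

lemma Dx_has_line_derivative:
  assumes "y \<in> S"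
  shows "((\<lambda>h. Dx k u (y + h *\<^sub>R (axis i 1, 0))) has_real_derivative Dx i (Dx k u) y) (at 0)"
    and "((\<lambda>h. Dx j (Dx k u) (y + h *\<^sub>R (axis i 1, 0))) has_real_derivative Dx i (Dx j (Dx k u)) y) (at 0)"
    and "((\<lambda>h. \<phi> (y + h *\<^sub>R (axis i 1, 0))) has_real_derivative Dx i \<phi> y) (at 0)"
  using Ck_on_has_real_derivative_along_line[OF u_C3, of "[(axis k 1, 0)]" y 0 "(axis i 1, 0)"]
    Ck_on_has_real_derivative_along_line[OF u_C3, of "[(axis j 1, 0), (axis k 1, 0)]" y 0 "(axis i 1, 0)"]
    Ck_on_has_real_derivative_along_line[OF \<phi>_C1, of "[]" y 0 "(axis i 1, 0)"] assms
  by (simp_all add: Dx_def zero_prod_def[symmetric])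

lemma continuous_on_Dx:
  "continuous_on S (Dx k u)" "continuous_on S (Dx i (Dx k u))"
  "continuous_on S (Dx i (Dx j (Dx k u)))" "continuous_on S (Dt u)"
  "continuous_on UNIV \<phi>" "continuous_on UNIV (Dx i \<phi>)"
  using Ck_on_continuous_on[OF u_C3, of "[(axis k 1, 0)]"]
    Ck_on_continuous_on[OF u_C3, of "[(axis i 1, 0), (axis k 1, 0)]"]
    Ck_on_continuous_on[OF u_C3, of "[(axis i 1, 0), (axis j 1, 0), (axis k 1, 0)]"]
    Ck_on_continuous_on[OF u_C3, of "[(0, 1)]"]
    Ck_on_continuous_on[OF \<phi>_C1, of "[]"] Ck_on_continuous_on[OF \<phi>_C1, of "[(axis i 1, 0)]"]
  by (simp_all add: Dx_def Dt_def)

lemma Dx_commute: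
  assumes "y \<in> S"
  shows "Dx j (Dx i u) y = Dx i (Dx j u) y"
    and "Dx j (Dx i (Dx k u)) y = Dx i (Dx j (Dx k u)) y"
proof -
  have "Ck_on 2 S (iter_ddir [(axis k 1, 0)] u)"
    using Ck_on_iter_ddir[of 2 "[(axis k 1, 0)]"] u_C3 by simp
  then show "Dx j (Dx i (Dx k u)) y = Dx i (Dx j (Dx k u)) y"
    using ddir_commute[OF _ open_S assms] by (simp add: Dx_def)
  show "Dx j (Dx i u) y = Dx i (Dx j u) y"
    using ddir_commute[OF Ck_on_mono[OF u_C3] open_S assms] by (simp add: Dx_def)
qed

lemma transpose_hess_x: "y \<in> S \<Longrightarrow> transpose (hess_x u y) = hess_x u y"
  using Dx_commute(1) by (simp add: transpose_def hess_x_def vec_eq_iff)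

text \<open>The field Delta u Du - D^2u Du, with D^2u Du written as Du v* D^2u; the two agree on S
  by transpose_hess_x.\<close>
definition lap_flux :: "(real^'n) \<times> real \<Rightarrow> real^'n" where
  "lap_flux y = lap_x u y *\<^sub>R grad_x u y - grad_x u y v* hess_x u y"

lemma lap_flux_component:
  "lap_flux y $ i = Dx i u y * lap_x u y - (\<Sum>j\<in>UNIV. Dx j u y * Dx j (Dx i u) y)"
  by (simp add: lap_flux_def grad_x_def hess_x_def vector_matrix_mult_def)

definition lap_flux_deriv :: "'n \<Rightarrow> (real^'n) \<times> real \<Rightarrow> real" where
  "lap_flux_deriv i y = Dx i (Dx i u) y * lap_x u y + Dx i u y * (\<Sum>j\<in>UNIV. Dx i (Dx j (Dx j u)) y)
     - (\<Sum>j\<in>UNIV. Dx i (Dx j u) y * Dx j (Dx i u) y + Dx j u y * Dx i (Dx j (Dx i u)) y)"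

lemma lap_flux_has_line_derivative:
  assumes "y \<in> S"
  shows "((\<lambda>h. lap_flux (y + h *\<^sub>R (axis i 1, 0)) $ i) has_real_derivative lap_flux_deriv i y) (at 0)"
proof -
  note D = Dx_has_line_derivative[OF assms]
  have lap: "((\<lambda>h. lap_x u (y + h *\<^sub>R (axis i 1, 0))) has_real_derivative (\<Sum>j\<in>UNIV. Dx i (Dx j (Dx j u)) y)) (at 0)"
    unfolding lap_x_eq_sum by (intro DERIV_sum D(2))
  have "((\<lambda>h. Dx i u (y + h *\<^sub>R (axis i 1, 0)) * lap_x u (y + h *\<^sub>R (axis i 1, 0))) has_real_derivative
      Dx i (Dx i u) y * lap_x u y + Dx i u y * (\<Sum>j\<in>UNIV. Dx i (Dx j (Dx j u)) y)) (at 0)"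
    using DERIV_mult[OF D(1) lap] by (simp add: zero_prod_def[symmetric] mult.commute)
  moreover have "((\<lambda>h. \<Sum>j\<in>UNIV. Dx j u (y + h *\<^sub>R (axis i 1, 0)) * Dx j (Dx i u) (y + h *\<^sub>R (axis i 1, 0)))
      has_real_derivative (\<Sum>j\<in>UNIV. Dx i (Dx j u) y * Dx j (Dx i u) y + Dx j u y * Dx i (Dx j (Dx i u)) y)) (at 0)"
    by (intro DERIV_sum DERIV_cong[OF DERIV_mult[OF D(1) D(2)]]) (simp add: zero_prod_def[symmetric])
  ultimately show ?thesis
    unfolding lap_flux_component lap_flux_deriv_def by (rule DERIV_diff)
qed

text \<open>The third-derivative terms cancel after one application of Schwarz's theorem to the
  first derivatives of u.\<close>
lemma div_lap_flux:
  assumes "y \<in> S"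
  shows "(\<Sum>i\<in>UNIV. lap_flux_deriv i y) = (lap_x u y)^2 - mat_norm_sq (hess_x u y)"
proof -
  have "(\<Sum>i\<in>UNIV. \<Sum>j\<in>UNIV. Dx j u y * Dx i (Dx j (Dx i u)) y)
      = (\<Sum>i\<in>UNIV. \<Sum>j\<in>UNIV. Dx i u y * Dx i (Dx j (Dx j u)) y)"
    using Dx_commute(2)[OF assms] by (subst sum.swap) simp
  moreover have "(\<Sum>i\<in>UNIV. \<Sum>j\<in>UNIV. Dx i (Dx j u) y * Dx j (Dx i u) y) = mat_norm_sq (hess_x u y)"
    using Dx_commute(1)[OF assms] by (simp add: mat_norm_sq_def hess_x_def power2_eq_square)
  moreover have "(\<Sum>i\<in>UNIV. Dx i (Dx i u) y * lap_x u y) = (lap_x u y)^2"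
    by (simp add: lap_x_eq_sum[of u y] power2_eq_square sum_distrib_right)
  ultimately show ?thesis
    unfolding lap_flux_deriv_def by (simp add: sum.distrib sum_subtractf sum_distrib_left)
qed

lemma grad_sq_has_line_derivative:
  assumes "y \<in> S"
  shows "((\<lambda>h. (norm (grad_x u (y + h *\<^sub>R (axis i 1, 0))))^2) has_real_derivative
           2 * (hess_x u y *v grad_x u y) $ i) (at 0)"
proof -
  have "((\<lambda>h. \<Sum>k\<in>UNIV. (Dx k u (y + h *\<^sub>R (axis i 1, 0)))^2) has_real_derivative
      (\<Sum>k\<in>UNIV. 2 * Dx k u y * Dx i (Dx k u) y)) (at 0)"
    using DERIV_power[OF Dx_has_line_derivative(1)[OF assms], where n=2]
    by (intro DERIV_sum) (simp add: zero_prod_def[symmetric] mult_ac)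
  moreover have "(\<Sum>k\<in>UNIV. 2 * Dx k u y * Dx i (Dx k u) y) = 2 * (hess_x u y *v grad_x u y) $ i"
    by (simp add: matrix_vector_mult_def hess_x_def grad_x_def sum_distrib_left mult_ac)
  ultimately show ?thesis unfolding norm_grad_x_power2 by simp
qed

lemma continuous_on_derivative_terms:
  "continuous_on S (lap_x u)" "continuous_on S (\<lambda>y. mat_norm_sq (hess_x u y))"
  "continuous_on S (\<lambda>y. (norm (grad_x u y))^2)" "continuous_on S (\<lambda>y. (hess_x u y *v grad_x u y) $ i)"
  "continuous_on S (\<lambda>y. lap_flux y $ i)" "continuous_on S (lap_flux_deriv i)"
  "continuous_on UNIV (\<lambda>y. (norm (grad_x \<phi> y))^2)"
proof -
  note c = continuous_on_Dx
  show lap: "continuous_on S (lap_x u)"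
    unfolding lap_x_eq_sum[abs_def] by (intro continuous_intros c)
  show "continuous_on S (\<lambda>y. mat_norm_sq (hess_x u y))"
    unfolding mat_norm_sq_def hess_x_def by (simp, intro continuous_intros c)
  show "continuous_on S (\<lambda>y. (norm (grad_x u y))^2)"
    unfolding norm_grad_x_power2 by (intro continuous_intros c)
  show "continuous_on S (\<lambda>y. (hess_x u y *v grad_x u y) $ i)"
    unfolding matrix_vector_mult_def hess_x_def grad_x_def by (simp, intro continuous_intros c)
  show "continuous_on S (\<lambda>y. lap_flux y $ i)"
    unfolding lap_flux_component by (intro continuous_intros c lap)
  show "continuous_on S (lap_flux_deriv i)"
    unfolding lap_flux_deriv_def[abs_def] by (intro continuous_intros c lap)
  show "continuous_on UNIV (\<lambda>y. (norm (grad_x \<phi> y))^2)"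
    unfolding norm_grad_x_power2 by (intro continuous_intros c)
qed

lemma grad_sq_add_pos: "(norm (grad_x u y))^2 + \<epsilon> > 0"
  using \<epsilon>_pos by (simp add: add_nonneg_pos)

definition weighted_flux :: "'n \<Rightarrow> (real^'n) \<times> real \<Rightarrow> real" where
  "weighted_flux i y = (\<phi> y)^2 * lap_flux y $ i / ((norm (grad_x u y))^2 + \<epsilon>)"

definition weighted_flux_deriv :: "'n \<Rightarrow> (real^'n) \<times> real \<Rightarrow> real" where
  "weighted_flux_deriv i y =
     (2 * \<phi> y * Dx i \<phi> y * lap_flux y $ i + (\<phi> y)^2 * lap_flux_deriv i y) / ((norm (grad_x u y))^2 + \<epsilon>)
     - (\<phi> y)^2 * lap_flux y $ i * (2 * (hess_x u y *v grad_x u y) $ i) / ((norm (grad_x u y))^2 + \<epsilon>)^2"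

lemma weighted_flux_has_line_derivative:
  assumes "y \<in> S"
  shows "((\<lambda>h. weighted_flux i (y + h *\<^sub>R (axis i 1, 0))) has_real_derivative weighted_flux_deriv i y) (at 0)"
proof -
  have "((\<lambda>h. (\<phi> (y + h *\<^sub>R (axis i 1, 0)))^2) has_real_derivative 2 * \<phi> y * Dx i \<phi> y) (at 0)"
    by (rule DERIV_cong[OF DERIV_power[OF Dx_has_line_derivative(3)[OF assms], where n=2]])
      (simp add: zero_prod_def[symmetric])
  from DERIV_mult[OF this lap_flux_has_line_derivative[OF assms]]
  have num: "((\<lambda>h. (\<phi> (y + h *\<^sub>R (axis i 1, 0)))^2 * lap_flux (y + h *\<^sub>R (axis i 1, 0)) $ i)
      has_real_derivative 2 * \<phi> y * Dx i \<phi> y * lap_flux y $ i + (\<phi> y)^2 * lap_flux_deriv i y) (at 0)"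
    by (simp add: zero_prod_def[symmetric] mult.commute)
  have den: "((\<lambda>h. (norm (grad_x u (y + h *\<^sub>R (axis i 1, 0))))^2 + \<epsilon>) has_real_derivative
      2 * (hess_x u y *v grad_x u y) $ i) (at 0)"
    using DERIV_add[OF grad_sq_has_line_derivative[OF assms] DERIV_const] by simp
  have nz: "(norm (grad_x u y'))^2 + \<epsilon> \<noteq> 0" for y'
    using grad_sq_add_pos[of y'] by linarith
  have quotient_rule: "(X * D - F * E) / (D * D) = X / D - F * E / D^2" if "D \<noteq> 0" for X D F E :: real
    using that by (simp add: field_simps power2_eq_square)
  from DERIV_divide[OF num den nz] show ?thesis
    unfolding weighted_flux_def
    by (rule DERIV_cong) (simp add: quotient_rule nz weighted_flux_deriv_def zero_prod_def[symmetric])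
qed

lemma continuous_on_weighted_flux:
  "continuous_on S (weighted_flux i)" "continuous_on S (weighted_flux_deriv i)"
proof -
  note c = continuous_on_derivative_terms continuous_on_subset[OF continuous_on_Dx(5) subset_UNIV]
    continuous_on_subset[OF continuous_on_Dx(6) subset_UNIV]
  have nz: "(norm (grad_x u y))^2 + \<epsilon> \<noteq> 0" for y using grad_sq_add_pos[of y] by linarith
  show "continuous_on S (weighted_flux i)"
    unfolding weighted_flux_def[abs_def] by (intro c continuous_intros) (simp add: nz)
  show "continuous_on S (weighted_flux_deriv i)"
    unfolding weighted_flux_deriv_def[abs_def] by (intro c continuous_intros) (simp_all add: nz)
qed

lemma sum_weighted_flux_deriv:
  assumes y: "y \<in> S"
  defines "N \<equiv> (norm (grad_x u y))^2 + \<epsilon>" and "q \<equiv> grad_x u y" and "H \<equiv> hess_x u y"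
  shows "(\<Sum>i\<in>UNIV. weighted_flux_deriv i y)
    = (2 * \<phi> y * (grad_x \<phi> y \<bullet> lap_flux y) + (\<phi> y)^2 * ((lap_x u y)^2 - mat_norm_sq H)) / N
      - 2 * (\<phi> y)^2 * (lap_x u y * ((H *v q) \<bullet> q) - (norm (H *v q))^2) / N^2"
proof -
  have "(\<Sum>i\<in>UNIV. Dx i \<phi> y * lap_flux y $ i) = grad_x \<phi> y \<bullet> lap_flux y"
    by (simp add: inner_vec_def grad_x_def)
  moreover have "(\<Sum>i\<in>UNIV. lap_flux y $ i * (H *v q) $ i) = lap_x u y * ((H *v q) \<bullet> q) - (norm (H *v q))^2"
  proof -
    have "q v* H = H *v q"
      using transpose_hess_x[OF y] transpose_matrix_vector[of H q] by (simp add: H_def)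
    then have "lap_flux y = lap_x u y *\<^sub>R q - H *v q" by (simp add: lap_flux_def q_def H_def)
    moreover have "(\<Sum>i\<in>UNIV. lap_flux y $ i * (H *v q) $ i) = lap_flux y \<bullet> (H *v q)"
      by (simp add: inner_vec_def)
    ultimately show ?thesis by (simp add: inner_diff_left inner_diff_right power2_norm_eq_inner inner_commute)
  qed
  moreover
  define a b c where "a = 2 * \<phi> y / N" and "b = (\<phi> y)^2 / N" and "c = 2 * (\<phi> y)^2 / N^2"
  have "weighted_flux_deriv i y
      = a * (Dx i \<phi> y * lap_flux y $ i) + b * lap_flux_deriv i y - c * (lap_flux y $ i * (H *v q) $ i)" for i
    by (simp add: weighted_flux_deriv_def a_def b_def c_def N_def q_def H_def add_divide_distrib mult_ac)
  then have "(\<Sum>i\<in>UNIV. weighted_flux_deriv i y) = a * (\<Sum>i\<in>UNIV. Dx i \<phi> y * lap_flux y $ i)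
      + b * (\<Sum>i\<in>UNIV. lap_flux_deriv i y) - c * (\<Sum>i\<in>UNIV. lap_flux y $ i * (H *v q) $ i)"
    by (simp add: sum.distrib sum_subtractf sum_distrib_left)
  ultimately show ?thesis
    by (simp add: div_lap_flux[OF y] H_def a_def b_def c_def add_divide_distrib)
qed

lemma weighted_flux_deriv_has_integral_0:
  assumes Q: "closure (ball z R \<times> {a<..<b}) \<subseteq> S"
    and supp: "compact (closure {y. \<phi> y \<noteq> 0})" "closure {y. \<phi> y \<noteq> 0} \<subseteq> ball z R \<times> UNIV"
  shows "(weighted_flux_deriv i has_integral 0) (ball z R \<times> {a<..<b})"
proof (rule line_derivative_has_integral_0_open[where G = "weighted_flux i" and e = "(axis i 1, 0)"])
  let ?Q = "ball z R \<times> {a<..<b}" and ?e = "(axis i 1, 0) :: (real^'n) \<times> real"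
  show "open ?Q" "bounded ?Q" by (simp_all add: open_Times bounded_Times)
  show "continuous_on (closure ?Q) (weighted_flux i)" "continuous_on (closure ?Q) (weighted_flux_deriv i)"
    using continuous_on_subset[OF continuous_on_weighted_flux(1) Q]
      continuous_on_subset[OF continuous_on_weighted_flux(2) Q] .
  show "((\<lambda>h. weighted_flux i (y + h *\<^sub>R ?e)) has_real_derivative weighted_flux_deriv i y) (at 0)"
    if "y \<in> ?Q" for y
  proof -
    have "y \<in> S" using subsetD[OF Q subsetD[OF closure_subset that]] .
    then show ?thesis by (rule weighted_flux_has_line_derivative)
  qed
  show "\<exists>d>0. \<forall>h. \<bar>h\<bar> < d \<longrightarrow> y + h *\<^sub>R ?e \<in> ?Q \<longrightarrow> weighted_flux i (y + h *\<^sub>R ?e) = 0"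
    if "y \<notin> ?Q" for y
  proof (cases "snd y \<in> {a<..<b}")
    case False
    then have "y + h *\<^sub>R ?e \<notin> ?Q" for h by (simp add: mem_Times_iff)
    then show ?thesis by (intro exI[of _ 1]) simp
  next
    case True
    then have "fst y \<notin> ball z R" using that by (simp add: mem_Times_iff)
    then obtain d where d: "d > 0" "\<forall>x. dist (fst x) (fst y) < d \<longrightarrow> \<phi> x = 0"
      using vanishes_near_fst_outside_support[OF supp] by blast
    have "\<phi> (y + h *\<^sub>R ?e) = 0" if "\<bar>h\<bar> < d" for h
      using d(2)[rule_format, of "y + h *\<^sub>R ?e"] that by (simp add: dist_norm)
    then show ?thesis using d(1) by (intro exI[of _ d]) (simp add: weighted_flux_def)
  qed
qed

lemma pointwise_flux_estimate:
  assumes y: "y \<in> S" and p: "p > 1" and \<eta>: "\<eta> > 0"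
    and eq: "Dt u y + pF_eps p \<epsilon> (grad_x u y) (hess_x u y) = 0"
  shows "\<epsilon> / 2 * (((lap_x u y)^2 - mat_norm_sq (hess_x u y)) / ((norm (grad_x u y))^2 + \<epsilon>) * (\<phi> y)^2)
      - \<epsilon> / 2 * (\<Sum>i\<in>UNIV. weighted_flux_deriv i y)
    \<le> 1 / (4 * (p - 1)) * ((Dt u y)^2 * (\<phi> y)^2) + \<eta> * (mat_norm_sq (hess_x u y) * (\<phi> y)^2)
      + (real CARD('n) + 1) / (2 * \<eta>) * \<epsilon> * (norm (grad_x \<phi> y))^2"
proof -
  define q H P where "q = grad_x u y" and "H = hess_x u y" and "P = \<phi> y"
  define N where "N = (norm q)^2 + \<epsilon>"
  define F where "F = trace H *\<^sub>R q - q v* H"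
  define C where "C = trace H * ((H *v q) \<bullet> q) - (norm (H *v q))^2"
  define K where "K = (real CARD('n) + 1) / (2 * \<eta>)"
  have N: "N \<noteq> 0" using grad_sq_add_pos[of y] by (simp add: N_def q_def)
  have lap: "lap_x u y = trace H" by (simp add: lap_x_def H_def)
  have sum: "(\<Sum>i\<in>UNIV. weighted_flux_deriv i y)
      = (2 * P * (grad_x \<phi> y \<bullet> F) + P^2 * ((trace H)^2 - mat_norm_sq H)) / N - 2 * P^2 * C / N^2"
    using sum_weighted_flux_deriv[OF y] by (simp add: lap lap_flux_def F_def C_def N_def P_def q_def H_def)
  have "\<epsilon> / 2 * (((lap_x u y)^2 - mat_norm_sq H) / N * P^2) - \<epsilon> / 2 * (\<Sum>i\<in>UNIV. weighted_flux_deriv i y)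
      = - \<epsilon> / N * P * (grad_x \<phi> y \<bullet> F) + P^2 * (\<epsilon> * C / N^2)"
    unfolding sum lap using N by (simp add: field_simps)
  also have "\<dots> \<le> (\<eta> * (mat_norm_sq H * P^2) + K * \<epsilon> * (norm (grad_x \<phi> y))^2) + P^2 * ((Dt u y)^2 / (4 * (p - 1)))"
  proof (rule add_mono)
    show "- \<epsilon> / N * P * (grad_x \<phi> y \<bullet> F) \<le> \<eta> * (mat_norm_sq H * P^2) + K * \<epsilon> * (norm (grad_x \<phi> y))^2"
      unfolding N_def F_def K_def by (rule flux_young_bound[OF \<epsilon>_pos \<eta>])
    have "((H *v q) \<bullet> q)^2 \<le> (norm (H *v q))^2 * (norm q)^2"
      using Cauchy_Schwarz_ineq2[of "H *v q" q] by (metis abs_ge_zero power2_abs power_mono power_mult_distrib)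
    moreover have "Dt u y = trace H + (p - 2) * ((H *v q) \<bullet> q) / ((norm q)^2 + \<epsilon>)"
      using eq by (simp add: pF_eps_def q_def H_def)
    ultimately have "\<epsilon> * C / N^2 \<le> (Dt u y)^2 / (4 * (p - 1))"
      unfolding N_def C_def using \<epsilon>_pos p by (intro p_parabolic_drift_le) auto
    then show "P^2 * (\<epsilon> * C / N^2) \<le> P^2 * ((Dt u y)^2 / (4 * (p - 1)))"
      by (rule mult_left_mono) simp
  qed
  finally show ?thesis
    by (simp add: N_def K_def q_def H_def P_def algebra_simps)
qed

lemma cylinder_estimate:
  assumes p: "p > 1" and \<eta>: "\<eta> > 0"
    and eqn: "\<And>y. y \<in> S \<Longrightarrow> Dt u y + pF_eps p \<epsilon> (grad_x u y) (hess_x u y) = 0"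
    and Q_S: "closure (ball z R \<times> {a<..<b}) \<subseteq> S"
    and supp: "compact (closure {y. \<phi> y \<noteq> 0})" "closure {y. \<phi> y \<noteq> 0} \<subseteq> ball z R \<times> UNIV"
  defines "Q \<equiv> ball z R \<times> {a<..<b}"
  shows "\<epsilon> / 2 * integral Q (\<lambda>y. ((lap_x u y)^2 - mat_norm_sq (hess_x u y)) / ((norm (grad_x u y))^2 + \<epsilon>) * (\<phi> y)^2)
     \<le> 1 / (4 * (p - 1)) * integral Q (\<lambda>y. (Dt u y)^2 * (\<phi> y)^2)
       + \<eta> * integral Q (\<lambda>y. mat_norm_sq (hess_x u y) * (\<phi> y)^2)
       + (real CARD('n) + 1) / (2 * \<eta>) * \<epsilon> * integral Q (\<lambda>y. (norm (grad_x \<phi> y))^2)"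
proof -
  have integral_Q: "(f has_integral integral Q f) Q" if "continuous_on S f" for f :: "_ \<Rightarrow> real"
    using integrable_continuous_closure[OF _ _ continuous_on_subset[OF that Q_S]]
    by (simp add: Q_def open_Times bounded_Times integrable_integral)
  have nz: "(norm (grad_x u y))^2 + \<epsilon> \<noteq> 0" for y using grad_sq_add_pos[of y] by linarith
  note c = continuous_on_derivative_terms continuous_on_subset[OF continuous_on_Dx(5) subset_UNIV]
    continuous_on_subset[OF continuous_on_Dx(4) subset_refl]
    continuous_on_subset[OF continuous_on_derivative_terms(7) subset_UNIV]
  have "((\<lambda>y. \<Sum>i\<in>UNIV. weighted_flux_deriv i y) has_integral 0) Q"
    using has_integral_sum[of UNIV weighted_flux_deriv "\<lambda>_. 0" Q]
      weighted_flux_deriv_has_integral_0[OF Q_S supp] by (simp add: Q_def)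
  then have lhs: "((\<lambda>y. \<epsilon> / 2 * (((lap_x u y)^2 - mat_norm_sq (hess_x u y)) / ((norm (grad_x u y))^2 + \<epsilon>) * (\<phi> y)^2)
      - \<epsilon> / 2 * (\<Sum>i\<in>UNIV. weighted_flux_deriv i y)) has_integral
      \<epsilon> / 2 * integral Q (\<lambda>y. ((lap_x u y)^2 - mat_norm_sq (hess_x u y)) / ((norm (grad_x u y))^2 + \<epsilon>) * (\<phi> y)^2)
      - \<epsilon> / 2 * 0) Q"
    by (intro has_integral_diff has_integral_mult_right integral_Q) (intro c continuous_intros; simp add: nz)
  have rhs: "((\<lambda>y. 1 / (4 * (p - 1)) * ((Dt u y)^2 * (\<phi> y)^2) + \<eta> * (mat_norm_sq (hess_x u y) * (\<phi> y)^2)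
      + (real CARD('n) + 1) / (2 * \<eta>) * \<epsilon> * (norm (grad_x \<phi> y))^2) has_integral
      1 / (4 * (p - 1)) * integral Q (\<lambda>y. (Dt u y)^2 * (\<phi> y)^2)
      + \<eta> * integral Q (\<lambda>y. mat_norm_sq (hess_x u y) * (\<phi> y)^2)
      + (real CARD('n) + 1) / (2 * \<eta>) * \<epsilon> * integral Q (\<lambda>y. (norm (grad_x \<phi> y))^2)) Q"
    by (intro has_integral_add has_integral_mult_right integral_Q) (intro c continuous_intros)+
  have "y \<in> Q \<Longrightarrow> y \<in> S" for y using Q_S closure_subset[of Q] by (auto simp: Q_def)
  then show ?thesis
    using has_integral_le[OF lhs rhs] pointwise_flux_estimate[OF _ p \<eta> eqn] by simp
qed

end

theorem lemma4p4:
  fixes \<eta> :: real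
  assumes "CARD('n::finite) \<ge> 2"
    and "0 < \<eta>" and "\<eta> < 1"
  shows "\<exists>C::real. \<forall>(p::real) (\<Omega>::(real^'n) set) (T::real) (u::(real^'n) \<times> real \<Rightarrow> real)
            (U::(real^'n) set) (\<epsilon>::real) (ue::(real^'n) \<times> real \<Rightarrow> real)
            (z::real^'n) (s::real) (r::real) (\<phi>::(real^'n) \<times> real \<Rightarrow> real).
     ((1 < p \<and> p < 2) \<or> 2 < p) \<and>
     open \<Omega> \<and> connected \<Omega> \<and> 0 < T \<and>
     visc_sol (pF_lo p) (pF_hi p) (\<Omega> \<times> {0<..<T}) u \<and>
     smooth_domain U \<and> closure U \<subseteq> \<Omega> \<and>
     0 < \<epsilon> \<and> \<epsilon> \<le> 1 \<and>
     continuous_on (closure (U \<times> {0<..<T})) ue \<and> smooth_on (U \<times> {0<..<T}) ue \<and>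
     visc_sol (pF_eps p \<epsilon>) (pF_eps p \<epsilon>) (U \<times> {0<..<T}) ue \<and>
     (\<forall>y\<in>parabolic_boundary U T. ue y = u y) \<and>
     0 < r \<and>
     compact (closure (ball z (2*r) \<times> {s - 4*r^2<..<s})) \<and>
     closure (ball z (2*r) \<times> {s - 4*r^2<..<s}) \<subseteq> U \<times> {0<..<T} \<and>
     smooth_on UNIV \<phi> \<and>
     compact (closure {y. \<phi> y \<noteq> 0}) \<and>
     closure {y. \<phi> y \<noteq> 0} \<subseteq> ball z (2*r) \<times> {s - 4*r^2<..<s + 4*r^2}
     \<longrightarrow>
     \<epsilon> / 2 * integral (ball z (2*r) \<times> {s - 4*r^2<..<s})
        (\<lambda>y. ((lap_x ue y)^2 - mat_norm_sq (hess_x ue y)) / ((norm (grad_x ue y))^2 + \<epsilon>) * (\<phi> y)^2)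
     \<le> 1 / (4 * (p - 1)) * integral (ball z (2*r) \<times> {s - 4*r^2<..<s}) (\<lambda>y. (Dt ue y)^2 * (\<phi> y)^2)
       + \<eta> * integral (ball z (2*r) \<times> {s - 4*r^2<..<s}) (\<lambda>y. mat_norm_sq (hess_x ue y) * (\<phi> y)^2)
       + C * \<epsilon> * integral (ball z (2*r) \<times> {s - 4*r^2<..<s}) (\<lambda>y. (norm (grad_x \<phi> y))^2)"
proof (intro exI[of _ "(real CARD('n) + 1) / (2 * \<eta>)"] allI impI, elim conjE)
  \<comment> \<open>The estimate is interior: u, \<Omega> and the boundary values of ue are not used.\<close>
  fix p \<Omega> T u U \<epsilon> ue z s r and \<phi> :: "(real^'n) \<times> real \<Rightarrow> real"
  assume p: "(1 < p \<and> p < 2) \<or> 2 < p" and U: "smooth_domain U" and \<epsilon>: "0 < \<epsilon>"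
    and ue: "smooth_on (U \<times> {0<..<T}) ue" "visc_sol (pF_eps p \<epsilon>) (pF_eps p \<epsilon>) (U \<times> {0<..<T}) ue"
    and Q: "closure (ball z (2*r) \<times> {s - 4*r^2<..<s}) \<subseteq> U \<times> {0<..<T}"
    and \<phi>: "smooth_on UNIV \<phi>" "compact (closure {y. \<phi> y \<noteq> 0})"
      "closure {y. \<phi> y \<noteq> 0} \<subseteq> ball z (2*r) \<times> {s - 4*r^2<..<s + 4*r^2}"
  have "open (U \<times> {0<..<T})" using U by (simp add: smooth_domain_def open_Times)
  moreover have "closure {y. \<phi> y \<noteq> 0} \<subseteq> ball z (2*r) \<times> UNIV" using \<phi>(3) by auto
  ultimately show "\<epsilon> / 2 * integral (ball z (2*r) \<times> {s - 4*r^2<..<s})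
        (\<lambda>y. ((lap_x ue y)^2 - mat_norm_sq (hess_x ue y)) / ((norm (grad_x ue y))^2 + \<epsilon>) * (\<phi> y)^2)
     \<le> 1 / (4 * (p - 1)) * integral (ball z (2*r) \<times> {s - 4*r^2<..<s}) (\<lambda>y. (Dt ue y)^2 * (\<phi> y)^2)
       + \<eta> * integral (ball z (2*r) \<times> {s - 4*r^2<..<s}) (\<lambda>y. mat_norm_sq (hess_x ue y) * (\<phi> y)^2)
       + (real CARD('n) + 1) / (2 * \<eta>) * \<epsilon> * integral (ball z (2*r) \<times> {s - 4*r^2<..<s}) (\<lambda>y. (norm (grad_x \<phi> y))^2)"
    using p \<epsilon> assms(2) Q \<phi>(2) ue
    by (intro cylinder_estimate[where S = "U \<times> {0<..<T}"])
      (auto intro: smooth_on_imp_Ck_on \<phi>(1) visc_sol_imp_equation)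
qed

end
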